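(* Let $(Q,P)$ be a weakly quasi-lattice ordered group and let $\Lambda$ be a $P$-graph. Then: (1) $\mathrm{FA}(\Lambda)$ is a right ideal in $\Lambda$, i.e. if $\lambda\in\mathrm{FA}(\Lambda)$ and $s(\lambda)=r(\lambda')$ then $\lambda\lambda'\in\mathrm{FA}(\Lambda)$; (2) if $\mu\delta\in\mathrm{FA}(\Lambda)$ then $\delta\in\mathrm{FA}(\Lambda)$; (3) $\mathrm{FA}(\Lambda)$ is closed under the source map $s$; (4) $\mathrm{FA}(\Lambda)$ is not necessarily closed under the range map $r$, i.e. there exist such $(Q,P)$ and a $P$-graph $\Lambda$ with $\lambda\in\mathrm{FA}(\Lambda)$ but $r(\lambda)\notin\mathrm{FA}(\Lambda)$; (5) if $\mu\in\mathrm{FA}(\Lambda)$ then $s(\mu)\Lambda\subseteq\mathrm{FA}(\Lambda)$; (6) if $\mu,\nu\in\mathrm{FA}(\Lambda)$ then there is a finite $J\subseteq\mathrm{FA}(\Lambda)$ such that $\mu\Lambda\cap\nu\Lambda=\bigcup_{\lambda\in J}\lambda\Lambda$.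
   Context: $(Q,P)$ weakly quasi-lattice ordered: $Q$ a discrete group, $P\subseteq Q$ a subsemigroup containing the identity $e$ with $P\cap P^{-1}=\{e\}$, and, with $p\le r$ meaning $pq=r$ for some $q\in P$, any two elements of $P$ with a common upper bound have a least common upper bound. A $P$-graph is a countable small category $\Lambda$ (identities $\Lambda^{(0)}$, range/source $r,s$) with a functor $d:\Lambda\to P$ with unique factorisation (if $d(\lambda)=pq$ there are unique $\mu,\nu$ with $\lambda=\mu\nu$, $d(\mu)=p$, $d(\nu)=q$). For $\lambda\in\Lambda$, $\lambda\Lambda=\{\lambda\mu: \mu\in\Lambda, s(\lambda)=r(\mu)\}$. $\Lambda$ is finitely aligned at $(\mu,\nu)$ if there is a finite (possibly empty) $J\subseteq\Lambda$ with $\mu\Lambda\cap\nu\Lambda=\bigcup_{\lambda\in J}\lambda\Lambda$; $\Lambda$ is finitely aligned at $\lambda$ if it is finitely aligned at $(\mu,\nu)$ for every $\mu\in\lambda\Lambda$ and $\nu\in\Lambda$; $\mathrm{FA}(\Lambda)$ is the set of $\lambda\in\Lambda$ at which $\Lambda$ is finitely aligned. *)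

theory Defs
  imports "HOL-Algebra.Group" "HOL-Library.Countable_Set"
begin

definition qle :: "'q monoid \<Rightarrow> 'q set \<Rightarrow> 'q \<Rightarrow> 'q \<Rightarrow> bool" where
  "qle G P p r \<longleftrightarrow> (\<exists>q\<in>P. p \<otimes>\<^bsub>G\<^esub> q = r)"

definition wqlo :: "'q monoid \<Rightarrow> 'q set \<Rightarrow> bool" where
  "wqlo G P \<longleftrightarrow> group G \<and> P \<subseteq> carrier G \<and> \<one>\<^bsub>G\<^esub> \<in> P
     \<and> (\<forall>p\<in>P. \<forall>q\<in>P. p \<otimes>\<^bsub>G\<^esub> q \<in> P)
     \<and> (\<forall>p\<in>P. inv\<^bsub>G\<^esub> p \<in> P \<longrightarrow> p = \<one>\<^bsub>G\<^esub>)
     \<and> (\<forall>p\<in>P. \<forall>r\<in>P. (\<exists>c\<in>P. qle G P p c \<and> qle G P r c) \<longrightarrow>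
          (\<exists>l\<in>P. qle G P p l \<and> qle G P r l \<and>
             (\<forall>c\<in>P. qle G P p c \<and> qle G P r c \<longrightarrow> qle G P l c)))"

text \<open>A small category given by its set of morphisms (objects are identified with
  their identity morphisms), range, source, composition and degree functor.\<close>
record ('a, 'q) pgraph =
  pmor :: "'a set"
  prng :: "'a \<Rightarrow> 'a"
  psrc :: "'a \<Rightarrow> 'a"
  pcomp :: "'a \<Rightarrow> 'a \<Rightarrow> 'a"
  pdeg :: "'a \<Rightarrow> 'q"

definition pobj :: "('a, 'q) pgraph \<Rightarrow> 'a set" where
  "pobj L = {v \<in> pmor L. prng L v = v}"

definition small_cat :: "('a, 'q) pgraph \<Rightarrow> bool" where
  "small_cat L \<longleftrightarrow>
     (\<forall>x\<in>pmor L. prng L x \<in> pmor L \<and> psrc L x \<in> pmor L)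
   \<and> (\<forall>x\<in>pmor L. prng L (prng L x) = prng L x \<and> psrc L (prng L x) = prng L x
                 \<and> prng L (psrc L x) = psrc L x \<and> psrc L (psrc L x) = psrc L x)
   \<and> (\<forall>x\<in>pmor L. \<forall>y\<in>pmor L. psrc L x = prng L y \<longrightarrow>
         pcomp L x y \<in> pmor L \<and> prng L (pcomp L x y) = prng L x
         \<and> psrc L (pcomp L x y) = psrc L y)
   \<and> (\<forall>x\<in>pmor L. \<forall>y\<in>pmor L. \<forall>z\<in>pmor L. psrc L x = prng L y \<longrightarrow> psrc L y = prng L z \<longrightarrow>
         pcomp L (pcomp L x y) z = pcomp L x (pcomp L y z))
   \<and> (\<forall>x\<in>pmor L. pcomp L (prng L x) x = x \<and> pcomp L x (psrc L x) = x)"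

definition pgraph :: "'q monoid \<Rightarrow> 'q set \<Rightarrow> ('a, 'q) pgraph \<Rightarrow> bool" where
  "pgraph G P L \<longleftrightarrow> small_cat L \<and> countable (pmor L)
   \<and> (\<forall>x\<in>pmor L. pdeg L x \<in> P)
   \<and> (\<forall>v\<in>pobj L. pdeg L v = \<one>\<^bsub>G\<^esub>)
   \<and> (\<forall>x\<in>pmor L. \<forall>y\<in>pmor L. psrc L x = prng L y \<longrightarrow>
         pdeg L (pcomp L x y) = pdeg L x \<otimes>\<^bsub>G\<^esub> pdeg L y)
   \<and> (\<forall>l\<in>pmor L. \<forall>p\<in>P. \<forall>q\<in>P. pdeg L l = p \<otimes>\<^bsub>G\<^esub> q \<longrightarrow>
         (\<exists>!(m, n). m \<in> pmor L \<and> n \<in> pmor L \<and> psrc L m = prng L n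
             \<and> pcomp L m n = l \<and> pdeg L m = p \<and> pdeg L n = q))"

text \<open>\<lambda>\<Lambda> = {\<lambda>\<mu> : s(\<lambda>) = r(\<mu>)}\<close>
definition rset :: "('a, 'q) pgraph \<Rightarrow> 'a \<Rightarrow> 'a set" where
  "rset L l = {pcomp L l m | m. m \<in> pmor L \<and> psrc L l = prng L m}"

definition fa_pair :: "('a, 'q) pgraph \<Rightarrow> 'a \<Rightarrow> 'a \<Rightarrow> bool" where
  "fa_pair L m n \<longleftrightarrow> (\<exists>J. finite J \<and> J \<subseteq> pmor L \<and>
      rset L m \<inter> rset L n = (\<Union>l\<in>J. rset L l))"

definition fa_at :: "('a, 'q) pgraph \<Rightarrow> 'a \<Rightarrow> bool" where
  "fa_at L l \<longleftrightarrow> (\<forall>m\<in>rset L l. \<forall>n\<in>pmor L. fa_pair L m n)"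

definition FA :: "('a, 'q) pgraph \<Rightarrow> 'a set" where
  "FA L = {l \<in> pmor L. fa_at L l}"

end

theory Submission
  imports Defs "HOL-Library.Product_Plus" "HOL-Library.Product_Order"
begin

(* Unique factorisation, together with cancellation in Q, makes left multiplication by \<mu>
  injective on the paths with range s(\<mu>), and it maps \<nu>\<Lambda> onto \<mu>\<nu>\<Lambda>. Hence a finite generating set
  for \<mu>\<alpha>\<Lambda> \<inter> \<mu>\<beta>\<Lambda> pulls back to one for \<alpha>\<Lambda> \<inter> \<beta>\<Lambda>, which gives (2). Part (1) holds because
  \<lambda>\<lambda>'\<Lambda> \<subseteq> \<lambda>\<Lambda>, and (3), (5), (6) follow formally from (1) and (2).
  For (4) take the \<nat>\<^sup>2-graph with edges \<mu>, \<nu> of range V and infinitely many commuting squares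
  \<mu>\<alpha>\<^sub>i = \<nu>\<beta>\<^sub>i: then \<mu>\<Lambda> \<inter> \<nu>\<Lambda> = {\<mu>\<alpha>\<^sub>i | i} is not finitely generated, so V \<notin> FA(\<Lambda>), whereas
  \<mu>\<alpha>\<^sub>i\<Lambda> = {\<mu>\<alpha>\<^sub>i}, so \<mu>\<alpha>\<^sub>i \<in> FA(\<Lambda>). *)

lemma FA_if_rset_singleton:
  assumes "l \<in> pmor L" "rset L l = {l}"
  shows "l \<in> FA L"
proof -
  have "fa_pair L l n" for n
  proof (cases "l \<in> rset L n")
    case True
    then show ?thesis
      unfolding fa_pair_def using assms by (intro exI[of _ "{l}"]) auto
  next
    case False
    then show ?thesis
      unfolding fa_pair_def using assms by (intro exI[of _ "{}"]) auto
  qed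
  then show ?thesis
    using assms unfolding FA_def fa_at_def by simp
qed

locale P_graph =
  fixes G :: "'q monoid" and P :: "'q set" and L :: "('a, 'q) pgraph"
  assumes group_G: "group G" and P_carrier: "P \<subseteq> carrier G" and pgraph: "pgraph G P L"
begin

lemma is_small_cat: "small_cat L"
  using pgraph unfolding pgraph_def by blast

lemma mor_rng [simp]: "x \<in> pmor L \<Longrightarrow> prng L x \<in> pmor L"
  and mor_src [simp]: "x \<in> pmor L \<Longrightarrow> psrc L x \<in> pmor L"
  and rng_rng [simp]: "x \<in> pmor L \<Longrightarrow> prng L (prng L x) = prng L x"
  and src_rng [simp]: "x \<in> pmor L \<Longrightarrow> psrc L (prng L x) = prng L x"
  and rng_src [simp]: "x \<in> pmor L \<Longrightarrow> prng L (psrc L x) = psrc L x"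
  and src_src [simp]: "x \<in> pmor L \<Longrightarrow> psrc L (psrc L x) = psrc L x"
  and comp_rng_left [simp]: "x \<in> pmor L \<Longrightarrow> pcomp L (prng L x) x = x"
  and comp_src_right [simp]: "x \<in> pmor L \<Longrightarrow> pcomp L x (psrc L x) = x"
  using is_small_cat unfolding small_cat_def by blast+

lemma comp_mor [simp]: "\<lbrakk>x \<in> pmor L; y \<in> pmor L; psrc L x = prng L y\<rbrakk> \<Longrightarrow> pcomp L x y \<in> pmor L"
  and rng_comp [simp]: "\<lbrakk>x \<in> pmor L; y \<in> pmor L; psrc L x = prng L y\<rbrakk> \<Longrightarrow> prng L (pcomp L x y) = prng L x"
  and src_comp [simp]: "\<lbrakk>x \<in> pmor L; y \<in> pmor L; psrc L x = prng L y\<rbrakk> \<Longrightarrow> psrc L (pcomp L x y) = psrc L y"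
  using is_small_cat unfolding small_cat_def by blast+

lemma comp_assoc:
  "\<lbrakk>x \<in> pmor L; y \<in> pmor L; z \<in> pmor L; psrc L x = prng L y; psrc L y = prng L z\<rbrakk>
   \<Longrightarrow> pcomp L (pcomp L x y) z = pcomp L x (pcomp L y z)"
  using is_small_cat unfolding small_cat_def by blast

lemma deg_in_carrier: "x \<in> pmor L \<Longrightarrow> pdeg L x \<in> carrier G"
  using pgraph P_carrier unfolding pgraph_def by blast

lemma deg_comp:
  "\<lbrakk>x \<in> pmor L; y \<in> pmor L; psrc L x = prng L y\<rbrakk> \<Longrightarrow> pdeg L (pcomp L x y) = pdeg L x \<otimes>\<^bsub>G\<^esub> pdeg L y"
  using pgraph unfolding pgraph_def by blast

lemma factorisation_unique:
  assumes "m \<in> pmor L" "n \<in> pmor L" "psrc L m = prng L n"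
    and "m' \<in> pmor L" "n' \<in> pmor L" "psrc L m' = prng L n'"
    and "pcomp L m n = pcomp L m' n'" "pdeg L m = pdeg L m'" "pdeg L n = pdeg L n'"
  shows "m = m' \<and> n = n'"
proof -
  have "pdeg L m \<in> P" "pdeg L n \<in> P"
    using pgraph assms(1,2) unfolding pgraph_def by blast+
  then have "\<exists>!(u, v). u \<in> pmor L \<and> v \<in> pmor L \<and> psrc L u = prng L v \<and> pcomp L u v = pcomp L m n
      \<and> pdeg L u = pdeg L m \<and> pdeg L v = pdeg L n"
    using pgraph assms(1-3) deg_comp[OF assms(1-3)] unfolding pgraph_def by simp
  then have "(m, n) = (m', n')"
    using assms by (smt (verit, best) case_prodI prod.inject)
  then show ?thesis
    by simp
qed

lemma comp_left_cancel:
  assumes "m \<in> pmor L" "a \<in> pmor L" "b \<in> pmor L" "psrc L m = prng L a" "psrc L m = prng L b"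
    and "pcomp L m a = pcomp L m b"
  shows "a = b"
proof -
  have "pdeg L m \<otimes>\<^bsub>G\<^esub> pdeg L a = pdeg L m \<otimes>\<^bsub>G\<^esub> pdeg L b"
    using assms deg_comp by metis
  then have "pdeg L a = pdeg L b"
    using deg_in_carrier assms(1-3) group.Units_eq[OF group_G]
      monoid.Units_l_cancel[OF group.is_monoid[OF group_G]] by simp
  then show ?thesis
    using factorisation_unique[of m a m b] assms by blast
qed


lemma rset_iff: "a \<in> rset L b \<longleftrightarrow> (\<exists>w\<in>pmor L. psrc L b = prng L w \<and> a = pcomp L b w)"
  unfolding rset_def by blast

lemma rset_subset_mor: "b \<in> pmor L \<Longrightarrow> a \<in> rset L b \<Longrightarrow> a \<in> pmor L"
  and rng_rset: "b \<in> pmor L \<Longrightarrow> a \<in> rset L b \<Longrightarrow> prng L a = prng L b"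
  unfolding rset_iff by auto

lemma mem_rset_self: "b \<in> pmor L \<Longrightarrow> b \<in> rset L b"
  unfolding rset_iff by (metis comp_src_right mor_src rng_src)

lemma comp_mem_rset: "\<lbrakk>b \<in> pmor L; w \<in> pmor L; psrc L b = prng L w\<rbrakk> \<Longrightarrow> pcomp L b w \<in> rset L b"
  unfolding rset_iff by blast

lemma rset_comp:
  assumes "m \<in> pmor L" "x \<in> pmor L" "psrc L m = prng L x"
  shows "rset L (pcomp L m x) = pcomp L m ` rset L x"
proof (intro equalityI subsetI)
  fix y assume "y \<in> rset L (pcomp L m x)"
  then obtain w where w: "w \<in> pmor L" "psrc L x = prng L w" "y = pcomp L (pcomp L m x) w"
    using assms by (auto simp: rset_iff)
  then have "y = pcomp L m (pcomp L x w)"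
    using assms comp_assoc by simp
  moreover have "pcomp L x w \<in> rset L x"
    using w assms comp_mem_rset by simp
  ultimately show "y \<in> pcomp L m ` rset L x"
    by blast
next
  fix y assume "y \<in> pcomp L m ` rset L x"
  then obtain w where w: "w \<in> pmor L" "psrc L x = prng L w" "y = pcomp L m (pcomp L x w)"
    by (auto simp: rset_iff)
  then have "y = pcomp L (pcomp L m x) w"
    using assms comp_assoc by simp
  then show "y \<in> rset L (pcomp L m x)"
    using assms w comp_mem_rset by simp
qed

lemma rset_subset_rset:
  assumes "b \<in> pmor L" "a \<in> rset L b"
  shows "rset L a \<subseteq> rset L b"
proof -
  obtain w where w: "w \<in> pmor L" "psrc L b = prng L w" "a = pcomp L b w"
    using assms(2) rset_iff by blast
  have "pcomp L b u \<in> rset L b" if "u \<in> rset L w" for u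
    using that assms(1) w rset_subset_mor rng_rset comp_mem_rset by metis
  then show ?thesis
    using rset_comp assms(1) w by auto
qed

lemma inj_on_comp_left: "m \<in> pmor L \<Longrightarrow> inj_on (pcomp L m) {a \<in> pmor L. prng L a = psrc L m}"
  by (rule inj_onI, rule comp_left_cancel[of m]) auto

lemma rset_subset_rng_fibre: "y \<in> pmor L \<Longrightarrow> rset L y \<subseteq> {a \<in> pmor L. prng L a = prng L y}"
  using rset_subset_mor rng_rset by blast

lemma subset_UN_rset: "J \<subseteq> pmor L \<Longrightarrow> J \<subseteq> (\<Union>j\<in>J. rset L j)"
  using mem_rset_self by blast

lemma rset_Int_comp_left:
  assumes m: "m \<in> pmor L" and x: "x \<in> pmor L" "psrc L m = prng L x"
    and n: "n \<in> pmor L" "psrc L m = prng L n"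
  shows "rset L (pcomp L m x) \<inter> rset L (pcomp L m n) = pcomp L m ` (rset L x \<inter> rset L n)"
  using inj_on_image_Int[OF inj_on_comp_left[OF m]] rset_subset_rng_fibre[OF x(1)]
    rset_subset_rng_fibre[OF n(1)] rset_comp[OF m x] rset_comp[OF m n] x(2) n(2)
  by simp

lemma fa_pair_of_rng_neq:
  assumes "x \<in> pmor L" "n \<in> pmor L" "prng L x \<noteq> prng L n"
  shows "fa_pair L x n"
proof -
  have "rset L x \<inter> rset L n = {}"
    using assms rng_rset by (metis disjoint_iff)
  then show ?thesis
    unfolding fa_pair_def by (intro exI[of _ "{}"]) simp
qed

lemma fa_pair_cancel_left:
  assumes m: "m \<in> pmor L" and x: "x \<in> pmor L" "psrc L m = prng L x"
    and n: "n \<in> pmor L" "psrc L m = prng L n"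
    and fa: "fa_pair L (pcomp L m x) (pcomp L m n)"
  shows "fa_pair L x n"
proof -
  obtain J where J: "finite J" "J \<subseteq> pmor L"
    and J_eq: "rset L (pcomp L m x) \<inter> rset L (pcomp L m n) = (\<Union>j\<in>J. rset L j)"
    using fa unfolding fa_pair_def by blast
  have "\<exists>j'\<in>rset L x. j = pcomp L m j'" if "j \<in> J" for j
    using that subset_UN_rset[OF J(2)] J_eq rset_comp[OF m x] by blast
  then obtain f where f: "\<And>j. j \<in> J \<Longrightarrow> f j \<in> rset L x \<and> j = pcomp L m (f j)"
    by metis
  define D where "D = {a \<in> pmor L. prng L a = psrc L m}"
  have f_D: "f j \<in> pmor L" "prng L (f j) = psrc L m" if "j \<in> J" for j
    using f[OF that] x rset_subset_mor rng_rset by auto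
  have "pcomp L m ` (rset L x \<inter> rset L n) = (\<Union>j\<in>J. rset L (pcomp L m (f j)))"
    using rset_Int_comp_left[OF m x n] J_eq f by simp
  also have "\<dots> = pcomp L m ` (\<Union>j\<in>J. rset L (f j))"
    using rset_comp[OF m] f_D by (simp add: image_UN)
  finally have images_eq:
    "pcomp L m ` (rset L x \<inter> rset L n) = pcomp L m ` (\<Union>j\<in>J. rset L (f j))" .
  have "rset L x \<inter> rset L n \<subseteq> D"
    using rset_subset_rng_fibre[OF x(1)] x(2) unfolding D_def by auto
  moreover have "(\<Union>j\<in>J. rset L (f j)) \<subseteq> D"
    using rset_subset_rng_fibre f_D unfolding D_def by fastforce
  ultimately have "rset L x \<inter> rset L n = (\<Union>j\<in>J. rset L (f j))"
    using images_eq inj_on_comp_left[OF m] unfolding D_def[symmetric]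
    by (simp only: inj_on_image_eq_iff)
  moreover have "finite (f ` J)" "f ` J \<subseteq> pmor L"
    using J(1) f_D by auto
  ultimately show ?thesis
    unfolding fa_pair_def by (intro exI[of _ "f ` J"]) simp
qed

lemma FA_mor: "l \<in> FA L \<Longrightarrow> l \<in> pmor L"
  unfolding FA_def by blast

lemma FA_rset_subset:
  assumes "l \<in> FA L"
  shows "rset L l \<subseteq> FA L"
proof
  fix x assume x: "x \<in> rset L l"
  have "x \<in> pmor L"
    using rset_subset_mor[OF FA_mor[OF assms] x] .
  moreover have "rset L x \<subseteq> rset L l"
    using rset_subset_rset[OF FA_mor[OF assms] x] .
  ultimately show "x \<in> FA L"
    using assms unfolding FA_def fa_at_def by (simp add: subset_iff)
qed

lemma FA_comp_right: "\<lbrakk>l \<in> FA L; l' \<in> pmor L; psrc L l = prng L l'\<rbrakk> \<Longrightarrow> pcomp L l l' \<in> FA L"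
  using FA_rset_subset comp_mem_rset FA_mor by (meson subsetD)

lemma FA_cancel_left:
  assumes m: "m \<in> pmor L" and d: "d \<in> pmor L" "psrc L m = prng L d"
    and fa: "pcomp L m d \<in> FA L"
  shows "d \<in> FA L"
  unfolding FA_def fa_at_def
proof (intro CollectI conjI ballI d(1))
  fix x n assume x_rset: "x \<in> rset L d" and n: "n \<in> pmor L"
  have x: "x \<in> pmor L" "psrc L m = prng L x"
    using x_rset d rset_subset_mor rng_rset by auto
  show "fa_pair L x n"
  proof (cases "prng L x = prng L n")
    case True
    have "pcomp L m x \<in> rset L (pcomp L m d)"
      using rset_comp[OF m d] x_rset by blast
    then have "fa_pair L (pcomp L m x) (pcomp L m n)"
      using fa n x True m unfolding FA_def fa_at_def by simp
    then show ?thesis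
      using fa_pair_cancel_left m x n True by simp
  qed (use x n fa_pair_of_rng_neq in simp)
qed

lemma FA_src: "l \<in> FA L \<Longrightarrow> psrc L l \<in> FA L"
  using FA_cancel_left[of l "psrc L l"] FA_mor by simp

lemma FA_finitely_aligned:
  assumes m: "m \<in> FA L" and n: "n \<in> FA L"
  shows "\<exists>J. finite J \<and> J \<subseteq> FA L \<and> rset L m \<inter> rset L n = (\<Union>l\<in>J. rset L l)"
proof -
  have "fa_pair L m n"
    using m mem_rset_self[OF FA_mor[OF m]] FA_mor[OF n] unfolding FA_def fa_at_def by simp
  then obtain J where J: "finite J" "J \<subseteq> pmor L" "rset L m \<inter> rset L n = (\<Union>l\<in>J. rset L l)"
    unfolding fa_pair_def by blast
  have "J \<subseteq> rset L m"
    using subset_UN_rset[OF J(2)] J(3) by blast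
  then show ?thesis
    using J FA_rset_subset[OF m] by (meson subset_trans)
qed

lemma not_fa_pair_if_infinite_singleton_rsets:
  assumes "infinite (rset L m \<inter> rset L n)"
    and "\<And>l. l \<in> rset L m \<inter> rset L n \<Longrightarrow> rset L l = {l}"
  shows "\<not> fa_pair L m n"
proof
  assume "fa_pair L m n"
  then obtain J where J: "finite J" "J \<subseteq> pmor L" "rset L m \<inter> rset L n = (\<Union>l\<in>J. rset L l)"
    unfolding fa_pair_def by blast
  have "J \<subseteq> rset L m \<inter> rset L n"
    using subset_UN_rset[OF J(2)] J(3) by blast
  then have "(\<Union>l\<in>J. rset L l) = (\<Union>l\<in>J. {l})"
    using assms(2) by (intro SUP_cong refl) blast
  then show False
    using J assms(1) by simp
qed

end

instance prod :: (ordered_ab_group_add, ordered_ab_group_add) ordered_ab_group_add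
  by standard (simp add: less_eq_prod_def)

(* The example for part (4) must live on nat, so an ordered group is transported to nat
  along an injection f. *)

definition add_group_image :: "('g::ab_group_add \<Rightarrow> 'n) \<Rightarrow> 'n monoid" where
  "add_group_image f = \<lparr>carrier = range f, mult = (\<lambda>x y. f (the_inv f x + the_inv f y)), one = f 0\<rparr>"

definition nonneg_image :: "('g::ordered_ab_group_add \<Rightarrow> 'n) \<Rightarrow> 'n set" where
  "nonneg_image f = f ` {u. 0 \<le> u}"

context
  fixes f :: "'g::{lattice, ordered_ab_group_add} \<Rightarrow> 'n"
  assumes inj: "inj f"
begin

lemma add_group_image_simps [simp]:
  "carrier (add_group_image f) = range f"
  "f u \<otimes>\<^bsub>add_group_image f\<^esub> f v = f (u + v)"
  "\<one>\<^bsub>add_group_image f\<^esub> = f 0"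
  using inj by (simp_all add: add_group_image_def the_inv_f_f)

lemma group_add_group_image: "group (add_group_image f)"
proof (rule groupI)
  show "\<exists>y\<in>carrier (add_group_image f). y \<otimes>\<^bsub>add_group_image f\<^esub> x = \<one>\<^bsub>add_group_image f\<^esub>"
    if x: "x \<in> carrier (add_group_image f)" for x
  proof -
    obtain u where "x = f u"
      using x by auto
    then show ?thesis
      by (intro bexI[of _ "f (- u)"]) auto
  qed
qed (auto simp: add.assoc)

lemma inv_add_group_image: "inv\<^bsub>add_group_image f\<^esub> (f u) = f (- u)"
  by (rule group.inv_equality[OF group_add_group_image]) auto

lemma qle_nonneg_image_iff: "qle (add_group_image f) (nonneg_image f) (f u) (f v) \<longleftrightarrow> u \<le> v"
proof
  assume "qle (add_group_image f) (nonneg_image f) (f u) (f v)"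
  then obtain q where "0 \<le> q" "u + q = v"
    unfolding qle_def nonneg_image_def using inj by (auto dest: injD)
  then show "u \<le> v"
    by (metis add_increasing2 order_refl)
next
  assume "u \<le> v"
  then have "f (v - u) \<in> nonneg_image f" "f u \<otimes>\<^bsub>add_group_image f\<^esub> f (v - u) = f v"
    unfolding nonneg_image_def by auto
  then show "qle (add_group_image f) (nonneg_image f) (f u) (f v)"
    unfolding qle_def by blast
qed

lemma wqlo_nonneg_image: "wqlo (add_group_image f) (nonneg_image f)"
  unfolding wqlo_def
proof (intro conjI group_add_group_image ballI impI)
  show "nonneg_image f \<subseteq> carrier (add_group_image f)" "\<one>\<^bsub>add_group_image f\<^esub> \<in> nonneg_image f"
    unfolding nonneg_image_def by auto
  show "p \<otimes>\<^bsub>add_group_image f\<^esub> q \<in> nonneg_image f" if "p \<in> nonneg_image f" "q \<in> nonneg_image f" for p q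
    using that unfolding nonneg_image_def by auto
  show "p = \<one>\<^bsub>add_group_image f\<^esub>"
    if p: "p \<in> nonneg_image f" "inv\<^bsub>add_group_image f\<^esub> p \<in> nonneg_image f" for p
  proof -
    obtain u where u: "p = f u" "0 \<le> u"
      using p(1) unfolding nonneg_image_def by auto
    then obtain w where "f (- u) = f w" "0 \<le> w"
      using p(2) unfolding nonneg_image_def by (auto simp: inv_add_group_image)
    then have "u \<le> 0"
      using inj by (auto dest: injD)
    then show ?thesis
      using u by simp
  qed
  show "\<exists>l\<in>nonneg_image f. qle (add_group_image f) (nonneg_image f) p l
      \<and> qle (add_group_image f) (nonneg_image f) r l
      \<and> (\<forall>c\<in>nonneg_image f. qle (add_group_image f) (nonneg_image f) p c
            \<and> qle (add_group_image f) (nonneg_image f) r c \<longrightarrow> qle (add_group_image f) (nonneg_image f) l c)"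
    if pr: "p \<in> nonneg_image f" "r \<in> nonneg_image f" for p r
  proof -
    obtain u w where uw: "p = f u" "r = f w" "0 \<le> u" "0 \<le> w"
      using pr unfolding nonneg_image_def by auto
    have "f (sup u w) \<in> nonneg_image f"
      using uw unfolding nonneg_image_def by (auto intro: le_supI1)
    moreover have "qle (add_group_image f) (nonneg_image f) p (f (sup u w))"
      "qle (add_group_image f) (nonneg_image f) r (f (sup u w))"
      using uw by (simp_all add: qle_nonneg_image_iff)
    moreover have "qle (add_group_image f) (nonneg_image f) (f (sup u w)) c"
      if c: "c \<in> nonneg_image f" "qle (add_group_image f) (nonneg_image f) p c"
        "qle (add_group_image f) (nonneg_image f) r c" for c
    proof -
      obtain v where "c = f v"
        using c(1) unfolding nonneg_image_def by auto
      then show ?thesis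
        using c(2,3) uw by (simp add: qle_nonneg_image_iff)
    qed
    ultimately show ?thesis
      by blast
  qed
qed

end

(* Vertices V, X, Y, Z; edges Mu: X \<rightarrow> V, Nu: Y \<rightarrow> V, A i: Z \<rightarrow> X, B i: Z \<rightarrow> Y, and the paths
  Lam i = Mu (A i) = Nu (B i) of degree (1, 1). *)

datatype example_mor = V | X | Y | Z | Mu | Nu | A nat | B nat | Lam nat

instance example_mor :: countable
  by countable_datatype

fun ex_obj :: "example_mor \<Rightarrow> bool" where
  "ex_obj V = True" | "ex_obj X = True" | "ex_obj Y = True" | "ex_obj Z = True" | "ex_obj _ = False"

fun ex_rng :: "example_mor \<Rightarrow> example_mor" where
  "ex_rng V = V" | "ex_rng X = X" | "ex_rng Y = Y" | "ex_rng Z = Z"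
| "ex_rng Mu = V" | "ex_rng Nu = V" | "ex_rng (Lam i) = V" | "ex_rng (A i) = X" | "ex_rng (B i) = Y"

fun ex_src :: "example_mor \<Rightarrow> example_mor" where
  "ex_src V = V" | "ex_src X = X" | "ex_src Y = Y" | "ex_src Z = Z"
| "ex_src Mu = X" | "ex_src Nu = Y" | "ex_src (Lam i) = Z" | "ex_src (A i) = Z" | "ex_src (B i) = Z"

fun ex_deg :: "example_mor \<Rightarrow> int \<times> int" where
  "ex_deg Mu = (1, 0)" | "ex_deg Nu = (0, 1)" | "ex_deg (A i) = (0, 1)" | "ex_deg (B i) = (1, 0)"
| "ex_deg (Lam i) = (1, 1)" | "ex_deg _ = (0, 0)"

fun ex_comp :: "example_mor \<Rightarrow> example_mor \<Rightarrow> example_mor" where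
  "ex_comp Mu (A i) = Lam i" | "ex_comp Nu (B i) = Lam i" | "ex_comp m n = (if ex_obj m then n else m)"

lemma ex_rng_src [simp]:
  "ex_rng (ex_rng x) = ex_rng x" "ex_src (ex_rng x) = ex_rng x"
  "ex_rng (ex_src x) = ex_src x" "ex_src (ex_src x) = ex_src x"
  by (cases x; simp)+

lemma ex_rng_eq_self_iff: "ex_rng x = x \<longleftrightarrow> ex_obj x"
  by (cases x) simp_all

lemma ex_comp_units [simp]: "ex_comp (ex_rng x) x = x" "ex_comp x (ex_src x) = x"
  by (cases x; simp)+

lemma ex_comp_composable:
  "ex_src x = ex_rng y \<Longrightarrow> ex_rng (ex_comp x y) = ex_rng x \<and> ex_src (ex_comp x y) = ex_src y
     \<and> ex_deg (ex_comp x y) = ex_deg x + ex_deg y"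
  by (cases x; cases y) simp_all

lemma ex_comp_assoc:
  "\<lbrakk>ex_src x = ex_rng y; ex_src y = ex_rng z\<rbrakk> \<Longrightarrow> ex_comp (ex_comp x y) z = ex_comp x (ex_comp y z)"
  by (cases x; cases y; cases z) simp_all

lemma ex_deg_eq_0_iff: "ex_deg x = 0 \<longleftrightarrow> ex_obj x"
  by (cases x) (simp_all add: zero_prod_def)

lemma ex_deg_nonneg: "0 \<le> ex_deg x"
  by (cases x) (simp_all add: zero_prod_def)

lemma ex_obj_rng_src: "ex_obj x \<Longrightarrow> ex_rng x = x \<and> ex_src x = x"
  by (cases x) auto

lemma ex_factorisation_cases:
  assumes "ex_src m = ex_rng n" "ex_comp m n = l"
  shows "(ex_obj m \<and> m = ex_rng l \<and> n = l) \<or> (ex_obj n \<and> m = l \<and> n = ex_src l)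
    \<or> (\<exists>i. m = Mu \<and> n = A i \<and> l = Lam i) \<or> (\<exists>i. m = Nu \<and> n = B i \<and> l = Lam i)"
  using assms by (cases m; cases n) auto

lemma ex_factorisation_unique:
  assumes "ex_src m = ex_rng n" "ex_comp m n = l" "ex_src m' = ex_rng n'" "ex_comp m' n' = l"
    and "ex_deg m = ex_deg m'" "ex_deg n = ex_deg n'"
  shows "m = m' \<and> n = n'"
proof -
  have "ex_obj m = ex_obj m'" "ex_obj n = ex_obj n'"
    using assms(5,6) ex_deg_eq_0_iff by metis+
  then show ?thesis
    using ex_factorisation_cases[OF assms(1,2)] ex_factorisation_cases[OF assms(3,4)] assms(5)
      ex_obj_rng_src by auto
qed

lemma ex_factorisation_exists:
  assumes "0 \<le> p" "0 \<le> q" "ex_deg l = p + q"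
  shows "\<exists>m n. ex_src m = ex_rng n \<and> ex_comp m n = l \<and> ex_deg m = p \<and> ex_deg n = q"
proof (cases "p = 0 \<or> q = 0")
  case True
  then show ?thesis
  proof
    assume "p = 0"
    then show ?thesis
      using assms by (intro exI[of _ "ex_rng l"] exI[of _ l]) (cases l; simp add: zero_prod_def)
  next
    assume "q = 0"
    then show ?thesis
      using assms by (intro exI[of _ l] exI[of _ "ex_src l"]) (cases l; simp add: zero_prod_def)
  qed
next
  case False
  obtain a b c d where pq: "p = (a, b)" "q = (c, d)"
    by fastforce
  have nonneg: "0 \<le> a" "0 \<le> b" "0 \<le> c" "0 \<le> d"
    using assms(1,2) pq by (auto simp: zero_prod_def)
  have "(a, b) \<noteq> (0, 0)" "(c, d) \<noteq> (0, 0)"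
    using False pq by (auto simp: zero_prod_def)
  then have "2 \<le> fst (ex_deg l) + snd (ex_deg l)"
    using assms(3) pq nonneg by auto
  then obtain i where l: "l = Lam i"
    by (cases l) auto
  then have "(a = 1 \<and> b = 0 \<and> c = 0 \<and> d = 1) \<or> (a = 0 \<and> b = 1 \<and> c = 1 \<and> d = 0)"
    using assms(3) pq nonneg \<open>(a, b) \<noteq> (0, 0)\<close> \<open>(c, d) \<noteq> (0, 0)\<close> by auto
  then show ?thesis
  proof
    assume "a = 1 \<and> b = 0 \<and> c = 0 \<and> d = 1"
    then show ?thesis
      using l pq by (intro exI[of _ Mu] exI[of _ "A i"]) auto
  next
    assume "a = 0 \<and> b = 1 \<and> c = 1 \<and> d = 0"
    then show ?thesis
      using l pq by (intro exI[of _ Nu] exI[of _ "B i"]) auto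
  qed
qed

definition example :: "(nat, nat) pgraph" where
  "example = \<lparr>pmor = range (to_nat :: example_mor \<Rightarrow> nat),
     prng = (\<lambda>x. to_nat (ex_rng (from_nat x))), psrc = (\<lambda>x. to_nat (ex_src (from_nat x))),
     pcomp = (\<lambda>x y. to_nat (ex_comp (from_nat x) (from_nat y))),
     pdeg = (\<lambda>x. to_nat (ex_deg (from_nat x)))\<rparr>"

lemma example_simps [simp]:
  "pmor example = range (to_nat :: example_mor \<Rightarrow> nat)"
  "prng example (to_nat x) = to_nat (ex_rng x)" "psrc example (to_nat x) = to_nat (ex_src x)"
  "pcomp example (to_nat x) (to_nat y) = to_nat (ex_comp x y)"
  "pdeg example (to_nat x) = to_nat (ex_deg x)"
  by (simp_all add: example_def)

abbreviation Z2 :: "nat monoid" where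
  "Z2 \<equiv> add_group_image (to_nat :: int \<times> int \<Rightarrow> nat)"

abbreviation N2 :: "nat set" where
  "N2 \<equiv> nonneg_image (to_nat :: int \<times> int \<Rightarrow> nat)"

lemma pgraph_example: "pgraph Z2 N2 example"
  unfolding pgraph_def
proof (intro conjI)
  show "small_cat example"
    unfolding small_cat_def using ex_comp_composable ex_comp_assoc by simp
  show "countable (pmor example)"
    by simp
  show "\<forall>x\<in>pmor example. pdeg example x \<in> N2"
    unfolding nonneg_image_def using ex_deg_nonneg by auto
  show "\<forall>v\<in>pobj example. pdeg example v = \<one>\<^bsub>Z2\<^esub>"
    unfolding pobj_def using ex_deg_eq_0_iff ex_rng_eq_self_iff by auto
  show "\<forall>x\<in>pmor example. \<forall>y\<in>pmor example. psrc example x = prng example y \<longrightarrow>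
      pdeg example (pcomp example x y) = pdeg example x \<otimes>\<^bsub>Z2\<^esub> pdeg example y"
    using ex_comp_composable by auto
  show "\<forall>l\<in>pmor example. \<forall>p\<in>N2. \<forall>q\<in>N2. pdeg example l = p \<otimes>\<^bsub>Z2\<^esub> q \<longrightarrow>
      (\<exists>!(m, n). m \<in> pmor example \<and> n \<in> pmor example \<and> psrc example m = prng example n
        \<and> pcomp example m n = l \<and> pdeg example m = p \<and> pdeg example n = q)"
  proof (intro ballI impI)
    fix l p q
    assume "l \<in> pmor example" "p \<in> N2" "q \<in> N2" and deg: "pdeg example l = p \<otimes>\<^bsub>Z2\<^esub> q"
    then obtain l' :: example_mor and p' q' :: "int \<times> int" where l': "l = to_nat l'" and p': "p = to_nat p'" "0 \<le> p'"
      and q': "q = to_nat q'" "0 \<le> q'"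
      unfolding nonneg_image_def by auto
    then have "ex_deg l' = p' + q'"
      using deg by simp
    then obtain m n where mn: "ex_src m = ex_rng n" "ex_comp m n = l'" "ex_deg m = p'" "ex_deg n = q'"
      using ex_factorisation_exists p'(2) q'(2) by blast
    show "\<exists>!(m, n). m \<in> pmor example \<and> n \<in> pmor example \<and> psrc example m = prng example n
        \<and> pcomp example m n = l \<and> pdeg example m = p \<and> pdeg example n = q"
    proof (rule ex1I[of _ "(to_nat m, to_nat n)"])
      show "case (to_nat m, to_nat n) of (m, n) \<Rightarrow> m \<in> pmor example \<and> n \<in> pmor example
          \<and> psrc example m = prng example n \<and> pcomp example m n = l
          \<and> pdeg example m = p \<and> pdeg example n = q"
        using mn l' p' q' by simp
    next
      fix z
      assume "case z of (m, n) \<Rightarrow> m \<in> pmor example \<and> n \<in> pmor example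
          \<and> psrc example m = prng example n \<and> pcomp example m n = l
          \<and> pdeg example m = p \<and> pdeg example n = q"
      then obtain m' n' :: example_mor where "z = (to_nat m', to_nat n')" "ex_src m' = ex_rng n'"
        "ex_comp m' n' = l'" "ex_deg m' = p'" "ex_deg n' = q'"
        using l' p' q' by auto
      then show "z = (to_nat m, to_nat n)"
        using ex_factorisation_unique[OF mn(1,2)] mn(3,4) by auto
    qed
  qed
qed

lemma wqlo_Z2: "wqlo Z2 N2"
  by (rule wqlo_nonneg_image) simp

interpretation example: P_graph Z2 N2 example
  using wqlo_Z2 pgraph_example unfolding wqlo_def by (intro P_graph.intro) auto

lemma rset_example: "rset example (to_nat a) = to_nat ` ex_comp a ` {w. ex_rng w = ex_src a}"
proof (intro equalityI subsetI)
  fix x assume "x \<in> rset example (to_nat a)"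
  then obtain w where "ex_rng w = ex_src a" "x = to_nat (ex_comp a w)"
    unfolding rset_def by auto
  then show "x \<in> to_nat ` ex_comp a ` {w. ex_rng w = ex_src a}"
    by blast
next
  fix x assume "x \<in> to_nat ` ex_comp a ` {w. ex_rng w = ex_src a}"
  then obtain w where "ex_rng w = ex_src a" "x = to_nat (ex_comp a w)"
    by blast
  then have "x = pcomp example (to_nat a) (to_nat w) \<and> to_nat w \<in> pmor example
      \<and> psrc example (to_nat a) = prng example (to_nat w)"
    by simp
  then show "x \<in> rset example (to_nat a)"
    unfolding rset_def by blast
qed

lemma ex_rng_fibre_Z: "{w. ex_rng w = Z} = {Z}"
  and ex_rng_fibre_X: "{w. ex_rng w = X} = insert X (range A)"
  and ex_rng_fibre_Y: "{w. ex_rng w = Y} = insert Y (range B)"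
  by (auto elim: ex_rng.elims)

lemma rset_example_Lam: "rset example (to_nat (Lam i)) = {to_nat (Lam i)}"
  by (simp add: rset_example ex_rng_fibre_Z)

lemma rset_example_Mu: "rset example (to_nat Mu) = to_nat ` insert Mu (range Lam)"
  by (simp add: rset_example ex_rng_fibre_X image_image)

lemma rset_example_Nu: "rset example (to_nat Nu) = to_nat ` insert Nu (range Lam)"
  by (simp add: rset_example ex_rng_fibre_Y image_image)

lemma Lam_in_FA: "to_nat (Lam i) \<in> FA example"
  by (rule FA_if_rset_singleton) (simp_all add: rset_example_Lam)

lemma not_fa_pair_Mu_Nu: "\<not> fa_pair example (to_nat Mu) (to_nat Nu)"
proof (rule example.not_fa_pair_if_infinite_singleton_rsets)
  have "rset example (to_nat Mu) \<inter> rset example (to_nat Nu) = to_nat ` range Lam"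
    unfolding rset_example_Mu rset_example_Nu by auto
  moreover have "infinite (to_nat ` range Lam)"
    by (simp add: finite_image_iff range_inj_infinite inj_def)
  ultimately show "infinite (rset example (to_nat Mu) \<inter> rset example (to_nat Nu))"
    by simp
  show "rset example l = {l}" if "l \<in> rset example (to_nat Mu) \<inter> rset example (to_nat Nu)" for l
    using that unfolding rset_example_Mu rset_example_Nu by (auto simp: rset_example_Lam)
qed

lemma V_notin_FA: "to_nat V \<notin> FA example"
proof
  assume "to_nat V \<in> FA example"
  moreover have "to_nat Mu \<in> rset example (to_nat V)"
    unfolding rset_example by force
  ultimately show False
    using not_fa_pair_Mu_Nu unfolding FA_def fa_at_def by auto
qed

lemma example_FA_not_closed_under_rng: "\<exists>l\<in>FA example. prng example l \<notin> FA example"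
  using Lam_in_FA[of 0] V_notin_FA by force

theorem lemma3p5:
  fixes G :: "'q monoid" and P :: "'q set" and L :: "('a, 'q) pgraph"
  assumes "wqlo G P" and "pgraph G P L"
  shows "(\<forall>l\<in>FA L. \<forall>l'\<in>pmor L. psrc L l = prng L l' \<longrightarrow> pcomp L l l' \<in> FA L)
    \<and> (\<forall>m\<in>pmor L. \<forall>d\<in>pmor L. psrc L m = prng L d \<longrightarrow> pcomp L m d \<in> FA L \<longrightarrow> d \<in> FA L)
    \<and> (\<forall>l\<in>FA L. psrc L l \<in> FA L)
    \<and> (\<exists>(G' :: nat monoid) (P' :: nat set) (L' :: (nat, nat) pgraph).
          wqlo G' P' \<and> pgraph G' P' L' \<and> (\<exists>l\<in>FA L'. prng L' l \<notin> FA L'))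
    \<and> (\<forall>m\<in>FA L. rset L (psrc L m) \<subseteq> FA L)
    \<and> (\<forall>m\<in>FA L. \<forall>n\<in>FA L. \<exists>J. finite J \<and> J \<subseteq> FA L \<and>
          rset L m \<inter> rset L n = (\<Union>l\<in>J. rset L l))"
proof -
  interpret P_graph G P L
    using assms unfolding wqlo_def by (intro P_graph.intro) auto
  show ?thesis
  proof (intro conjI ballI impI)
    show "pcomp L l l' \<in> FA L" if "l \<in> FA L" "l' \<in> pmor L" "psrc L l = prng L l'" for l l'
      using FA_comp_right that .
    show "d \<in> FA L"
      if "m \<in> pmor L" "d \<in> pmor L" "psrc L m = prng L d" "pcomp L m d \<in> FA L" for m d
      using FA_cancel_left that .
    show "psrc L l \<in> FA L" if "l \<in> FA L" for l
      using FA_src that .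
    show "\<exists>(G' :: nat monoid) (P' :: nat set) (L' :: (nat, nat) pgraph).
        wqlo G' P' \<and> pgraph G' P' L' \<and> (\<exists>l\<in>FA L'. prng L' l \<notin> FA L')"
      using wqlo_Z2 pgraph_example example_FA_not_closed_under_rng by blast
    show "rset L (psrc L m) \<subseteq> FA L" if "m \<in> FA L" for m
      using FA_rset_subset FA_src that .
    show "\<exists>J. finite J \<and> J \<subseteq> FA L \<and> rset L m \<inter> rset L n = (\<Union>l\<in>J. rset L l)"
      if "m \<in> FA L" "n \<in> FA L" for m n
      using FA_finitely_aligned that .
  qed
qed

end
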